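(* For every $t_0\in\mathbb{C}^*$ with $|t_0|<3-2\sqrt2$ or $|t_0|>3+2\sqrt2$, the specialized Burau representation $\rho_3^{t_0}:\mathcal{B}_3\to\mathrm{GL}(2,\mathbb{C})$ is faithful.
   Context: $\mathcal{B}_3$ is the braid group on three strands, with generators $\sigma_1,\sigma_2$ and the single relation $\sigma_1\sigma_2\sigma_1=\sigma_2\sigma_1\sigma_2$. For $t_0\in\mathbb{C}^*$, the specialized (reduced) Burau representation $\rho_3^{t_0}$ is the homomorphism defined by $\sigma_1\mapsto\begin{pmatrix}-t_0&1\\0&1\end{pmatrix}$, $\sigma_2\mapsto\begin{pmatrix}1&0\\t_0&-t_0\end{pmatrix}$. *)

theory Defs
  imports "HOL-Analysis.Analysis"
begin

text \<open>The braid group B_3, presented by generators sigma_1, sigma_2 and the single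
relation sigma_1 sigma_2 sigma_1 = sigma_2 sigma_1 sigma_2, realised as words in
the letters sigma_i^{+1}, sigma_i^{-1} modulo the congruence generated by free
cancellation and the braid relation.\<close>

datatype gen = S1 | S2

type_synonym letter = "gen \<times> bool"   \<comment> \<open>(g, True) = g, (g, False) = g^{-1}\<close>

type_synonym bword = "letter list"

fun inv_letter :: "letter \<Rightarrow> letter" where
  "inv_letter (g, b) = (g, \<not> b)"

inductive basic_rel :: "bword \<Rightarrow> bword \<Rightarrow> bool" where
  cancel: "basic_rel [x, inv_letter x] []"
| braid: "basic_rel [(S1,True),(S2,True),(S1,True)] [(S2,True),(S1,True),(S2,True)]"

inductive braid_eq :: "bword \<Rightarrow> bword \<Rightarrow> bool" where
  step: "basic_rel l r \<Longrightarrow> braid_eq (u @ l @ v) (u @ r @ v)"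
| refl: "braid_eq w w"
| sym: "braid_eq w w' \<Longrightarrow> braid_eq w' w"
| trans: "braid_eq w1 w2 \<Longrightarrow> braid_eq w2 w3 \<Longrightarrow> braid_eq w1 w3"

text \<open>Specialized reduced Burau matrices (index 1 = first row/column, 2 = second).\<close>
definition burau_s1 :: "complex \<Rightarrow> complex^2^2" where
  "burau_s1 t = (\<chi> i j. if i = 1 then (if j = 1 then - t else 1)
                          else (if j = 1 then 0 else 1))"

definition burau_s2 :: "complex \<Rightarrow> complex^2^2" where
  "burau_s2 t = (\<chi> i j. if i = 1 then (if j = 1 then 1 else 0)
                          else (if j = 1 then t else - t))"

fun burau_gen :: "complex \<Rightarrow> gen \<Rightarrow> complex^2^2" where
  "burau_gen t S1 = burau_s1 t"
| "burau_gen t S2 = burau_s2 t"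

fun burau_letter :: "complex \<Rightarrow> letter \<Rightarrow> complex^2^2" where
  "burau_letter t (g, True) = burau_gen t g"
| "burau_letter t (g, False) = matrix_inv (burau_gen t g)"

definition burau :: "complex \<Rightarrow> bword \<Rightarrow> complex^2^2" where
  "burau t w = foldr (\<lambda>x M. burau_letter t x ** M) w (mat 1)"

end

theory Submission
  imports Defs
begin

(*
  Modulo its centre, which is generated by the full twist D^2 = (s1 s2 s1)^2, the group B_3 is
  the free product of the cyclic groups of orders 2 and 3 generated by the images of
  A = s1 s2 s1 and B = s1 s2. So every braid equals D^(2k) times an alternating product of
  syllables A and B, B^2. Under rho_3^t the full twist acts as the scalar t^3, and for
  |t| <= 1/3 or |t| >= 3 (a range containing that of the theorem) there are disjoint cones
  X, Y in C^2 such that A maps Y into X while B and B^2 map X into Y. By ping-pong no nonempty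
  alternating product acts as a scalar, so a braid in the kernel has no syllables and
  t^(3k) = 1, which forces k = 0 because |t| <> 1.
*)

section \<open>Braid words\<close>

notation braid_eq (infix "\<simeq>" 50)

lemmas [trans] = braid_eq.trans

lemma braid_eq_context: "w \<simeq> w' \<Longrightarrow> p @ w @ s \<simeq> p @ w' @ s"
proof (induction rule: braid_eq.induct)
  case (step l r u v)
  then show ?case using braid_eq.step[of l r "p @ u" "v @ s"] by simp
qed (auto intro: braid_eq.intros)

lemma braid_eq_append: "u \<simeq> u' \<Longrightarrow> v \<simeq> v' \<Longrightarrow> u @ v \<simeq> u' @ v'"
  using braid_eq_context[of u u' "[]" v] braid_eq_context[of v v' u' "[]"]
  by (auto intro: braid_eq.trans)

lemma braid_eq_cancel: "u @ [x, inv_letter x] @ v \<simeq> u @ v"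
  using braid_eq.step[OF basic_rel.cancel, of u x v] by simp

definition inv_word :: "bword \<Rightarrow> bword" where
  "inv_word w = rev (map inv_letter w)"

lemma inv_letter_inv_letter [simp]: "inv_letter (inv_letter x) = x"
  by (cases x) simp

lemma inv_word_simps [simp]:
  "inv_word [] = []"
  "inv_word (x # w) = inv_word w @ [inv_letter x]"
  "inv_word (inv_word w) = w"
  by (simp_all add: inv_word_def rev_map comp_def)

lemma braid_eq_inv_word_right: "w @ inv_word w \<simeq> []"
proof (induction w)
  case Nil
  show ?case by (simp add: braid_eq.refl)
next
  case (Cons x w)
  have "(x # w) @ inv_word (x # w) = [x] @ (w @ inv_word w) @ [inv_letter x]"
    by simp
  also have "\<dots> \<simeq> [x] @ [] @ [inv_letter x]"
    using Cons.IH by (rule braid_eq_context)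
  also have "\<dots> \<simeq> []"
    using braid_eq_cancel[of "[]" x "[]"] by simp
  finally show ?case .
qed

lemma braid_eq_inv_word_left: "inv_word w @ w \<simeq> []"
  using braid_eq_inv_word_right[of "inv_word w"] by simp

lemma braid_eq_if_append_inv_word:
  assumes "u @ inv_word v \<simeq> []"
  shows "u \<simeq> v"
proof -
  have "u = u @ []"
    by simp
  also have "\<dots> \<simeq> u @ inv_word v @ v"
    using braid_eq_append[OF braid_eq.refl braid_eq.sym[OF braid_eq_inv_word_left]] .
  also have "\<dots> = (u @ inv_word v) @ v"
    by simp
  also have "\<dots> \<simeq> [] @ v"
    using braid_eq_append[OF assms braid_eq.refl] .
  finally show ?thesis
    by simp
qed

definition central :: "bword \<Rightarrow> bool" where
  "central z \<longleftrightarrow> (\<forall>w. w @ z \<simeq> z @ w)"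

lemma commutes_inv_letter:
  assumes "x # z \<simeq> z @ [x]"
  shows "inv_letter x # z \<simeq> z @ [inv_letter x]"
proof -
  have "inv_letter x # z \<simeq> [inv_letter x] @ z @ [x, inv_letter x]"
    using braid_eq_cancel[of "inv_letter x # z" x "[]"] by (simp add: braid_eq.sym)
  also have "\<dots> = [inv_letter x] @ (z @ [x]) @ [inv_letter x]"
    by simp
  also have "\<dots> \<simeq> [inv_letter x] @ (x # z) @ [inv_letter x]"
    using braid_eq.sym[OF assms] by (rule braid_eq_context)
  also have "\<dots> \<simeq> z @ [inv_letter x]"
    using braid_eq_cancel[of "[]" "inv_letter x" "z @ [inv_letter x]"] by simp
  finally show ?thesis .
qed

lemma central_if_commutes_with_letters:
  assumes "\<And>x. x # z \<simeq> z @ [x]"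
  shows "central z"
  unfolding central_def
proof
  fix w
  show "w @ z \<simeq> z @ w"
  proof (induction w)
    case Nil
    show ?case by (simp add: braid_eq.refl)
  next
    case (Cons x w)
    have "(x # w) @ z \<simeq> [x] @ z @ w"
      using braid_eq_append[OF braid_eq.refl[of "[x]"] Cons.IH] by simp
    also have "\<dots> \<simeq> (z @ [x]) @ w"
      using braid_eq_append[OF assms braid_eq.refl] by simp
    finally show ?case by simp
  qed
qed

lemma central_inv_word:
  assumes "central z"
  shows "central (inv_word z)"
  unfolding central_def
proof
  fix w
  have "w @ inv_word z \<simeq> (inv_word z @ z) @ w @ inv_word z"
    using braid_eq_append[OF braid_eq.sym[OF braid_eq_inv_word_left] braid_eq.refl] by simp
  also have "\<dots> = inv_word z @ (z @ w) @ inv_word z"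
    by simp
  also have "\<dots> \<simeq> inv_word z @ (w @ z) @ inv_word z"
    using assms braid_eq.sym unfolding central_def by (blast intro: braid_eq_context)
  also have "\<dots> = (inv_word z @ w) @ z @ inv_word z"
    by simp
  also have "\<dots> \<simeq> (inv_word z @ w) @ []"
    by (rule braid_eq_append[OF braid_eq.refl braid_eq_inv_word_right])
  finally show "w @ inv_word z \<simeq> inv_word z @ w" by simp
qed

lemma central_append:
  assumes "central u" "central v"
  shows "central (u @ v)"
  unfolding central_def
proof
  fix w
  have "w @ u @ v \<simeq> (u @ w) @ v"
    using braid_eq_append[OF assms(1)[unfolded central_def, rule_format] braid_eq.refl] by simp
  also have "\<dots> \<simeq> u @ v @ w"
    using braid_eq_append[OF braid_eq.refl assms(2)[unfolded central_def, rule_format]] by simp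
  finally show "w @ u @ v \<simeq> (u @ v) @ w" by simp
qed

lemma central_Nil: "central []"
  by (simp add: central_def braid_eq.refl)

lemma central_concat_replicate: "central z \<Longrightarrow> central (concat (replicate n z))"
  by (induction n) (simp_all add: central_Nil central_append)

definition word_pow :: "bword \<Rightarrow> int \<Rightarrow> bword" where
  "word_pow z k = (if 0 \<le> k then concat (replicate (nat k) z)
                   else concat (replicate (nat (- k)) (inv_word z)))"

lemma word_pow_zero [simp]: "word_pow z 0 = []"
  by (simp add: word_pow_def)

lemma word_pow_inv_word: "word_pow (inv_word z) (- k) = word_pow z k"
  by (simp add: word_pow_def)

lemma central_word_pow: "central z \<Longrightarrow> central (word_pow z k)"
  by (simp add: word_pow_def central_concat_replicate central_inv_word)

lemma word_pow_succ: "z @ word_pow z k \<simeq> word_pow z (k + 1)"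
proof (cases "0 \<le> k")
  case True
  then have "nat (k + 1) = Suc (nat k)" by simp
  with True show ?thesis by (simp add: word_pow_def braid_eq.refl)
next
  case False
  define n where "n = nat (- k - 1)"
  have n: "nat (- k) = Suc n" "nat (- (k + 1)) = n"
    using False by (simp_all add: n_def Suc_nat_eq_nat_zadd1)
  have "z @ word_pow z k = [] @ (z @ inv_word z) @ concat (replicate n (inv_word z))"
    using False n by (simp add: word_pow_def)
  also have "\<dots> \<simeq> [] @ [] @ concat (replicate n (inv_word z))"
    using braid_eq_inv_word_right by (rule braid_eq_context)
  also have "\<dots> = word_pow z (k + 1)"
    using False n by (cases "k = - 1") (simp_all add: word_pow_def)
  finally show ?thesis .
qed

lemma word_pow_pred: "inv_word z @ word_pow z k \<simeq> word_pow z (k - 1)"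
  using word_pow_succ[of "inv_word z" "- k"] word_pow_inv_word[of z "k - 1"] word_pow_inv_word[of z k]
  by simp

abbreviation \<sigma>\<^sub>1 :: letter where "\<sigma>\<^sub>1 \<equiv> (S1, True)"
abbreviation \<sigma>\<^sub>2 :: letter where "\<sigma>\<^sub>2 \<equiv> (S2, True)"

lemma braid_eq_braid_rel: "u @ [\<sigma>\<^sub>1, \<sigma>\<^sub>2, \<sigma>\<^sub>1] @ v \<simeq> u @ [\<sigma>\<^sub>2, \<sigma>\<^sub>1, \<sigma>\<^sub>2] @ v"
  by (rule braid_eq.step) (rule basic_rel.braid)

datatype syllable = SylA | SylB | SylB2

fun syl_word :: "syllable \<Rightarrow> bword" where
  "syl_word SylA = [\<sigma>\<^sub>1, \<sigma>\<^sub>2, \<sigma>\<^sub>1]"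
| "syl_word SylB = [\<sigma>\<^sub>1, \<sigma>\<^sub>2]"
| "syl_word SylB2 = [\<sigma>\<^sub>1, \<sigma>\<^sub>2, \<sigma>\<^sub>1, \<sigma>\<^sub>2]"

definition full_twist :: bword where
  "full_twist = syl_word SylA @ syl_word SylA"

lemma syl_B_cube: "syl_word SylB @ syl_word SylB2 \<simeq> full_twist"
  using braid_eq.sym[OF braid_eq_braid_rel[of "[\<sigma>\<^sub>1, \<sigma>\<^sub>2, \<sigma>\<^sub>1]" "[]"]]
  by (simp add: full_twist_def)

lemma syl_B2_square: "syl_word SylB2 @ syl_word SylB2 \<simeq> full_twist @ syl_word SylB"
  using braid_eq.sym[OF braid_eq_braid_rel[of "[\<sigma>\<^sub>1, \<sigma>\<^sub>2, \<sigma>\<^sub>1]" "[\<sigma>\<^sub>1, \<sigma>\<^sub>2]"]]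
  by (simp add: full_twist_def)

lemma full_twist_commutes_\<sigma>\<^sub>1: "\<sigma>\<^sub>1 # full_twist \<simeq> full_twist @ [\<sigma>\<^sub>1]"
proof -
  have "\<sigma>\<^sub>1 # full_twist = [\<sigma>\<^sub>1] @ [\<sigma>\<^sub>1, \<sigma>\<^sub>2, \<sigma>\<^sub>1] @ [\<sigma>\<^sub>1, \<sigma>\<^sub>2, \<sigma>\<^sub>1]"
    by (simp add: full_twist_def)
  also have "\<dots> \<simeq> [\<sigma>\<^sub>1, \<sigma>\<^sub>2, \<sigma>\<^sub>1] @ [\<sigma>\<^sub>2, \<sigma>\<^sub>1, \<sigma>\<^sub>2] @ [\<sigma>\<^sub>1]"
    using braid_eq_braid_rel[of "[\<sigma>\<^sub>1]" "[\<sigma>\<^sub>1, \<sigma>\<^sub>2, \<sigma>\<^sub>1]"] by simp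
  also have "\<dots> \<simeq> full_twist @ [\<sigma>\<^sub>1]"
    using braid_eq.sym[OF braid_eq_braid_rel[of "[\<sigma>\<^sub>1, \<sigma>\<^sub>2, \<sigma>\<^sub>1]" "[\<sigma>\<^sub>1]"]]
    by (simp add: full_twist_def)
  finally show ?thesis .
qed

lemma full_twist_commutes_\<sigma>\<^sub>2: "\<sigma>\<^sub>2 # full_twist \<simeq> full_twist @ [\<sigma>\<^sub>2]"
proof -
  have "\<sigma>\<^sub>2 # full_twist = [] @ [\<sigma>\<^sub>2, \<sigma>\<^sub>1, \<sigma>\<^sub>2] @ [\<sigma>\<^sub>1, \<sigma>\<^sub>1, \<sigma>\<^sub>2, \<sigma>\<^sub>1]"
    by (simp add: full_twist_def)
  also have "\<dots> \<simeq> [\<sigma>\<^sub>1, \<sigma>\<^sub>2, \<sigma>\<^sub>1, \<sigma>\<^sub>1] @ [\<sigma>\<^sub>1, \<sigma>\<^sub>2, \<sigma>\<^sub>1] @ []"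
    using braid_eq.sym[OF braid_eq_braid_rel[of "[]" "[\<sigma>\<^sub>1, \<sigma>\<^sub>1, \<sigma>\<^sub>2, \<sigma>\<^sub>1]"]] by simp
  also have "\<dots> \<simeq> full_twist @ [\<sigma>\<^sub>2]"
    using braid_eq_braid_rel[of "[\<sigma>\<^sub>1, \<sigma>\<^sub>2, \<sigma>\<^sub>1, \<sigma>\<^sub>1]" "[]"] by (simp add: full_twist_def)
  finally show ?thesis .
qed

lemma central_full_twist: "central full_twist"
proof (rule central_if_commutes_with_letters)
  fix x :: letter
  obtain g b where x: "x = (g, b)" by (cases x)
  have "(g, True) # full_twist \<simeq> full_twist @ [(g, True)]"
    using full_twist_commutes_\<sigma>\<^sub>1 full_twist_commutes_\<sigma>\<^sub>2 by (cases g) simp_all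
  then show "x # full_twist \<simeq> full_twist @ [x]"
    using commutes_inv_letter unfolding x by (cases b) fastforce+
qed

section \<open>Normal form\<close>

fun cons_syl :: "syllable \<Rightarrow> int \<times> syllable list \<Rightarrow> int \<times> syllable list" where
  "cons_syl SylA (k, SylA # l) = (k + 1, l)"
| "cons_syl SylB (k, SylB # l) = (k, SylB2 # l)"
| "cons_syl SylB (k, SylB2 # l) = (k + 1, l)"
| "cons_syl SylB2 (k, SylB # l) = (k + 1, l)"
| "cons_syl SylB2 (k, SylB2 # l) = (k + 1, SylB # l)"
| "cons_syl s (k, l) = (k, s # l)"

fun nf_word :: "int \<times> syllable list \<Rightarrow> bword" where
  "nf_word (k, l) = word_pow full_twist k @ concat (map syl_word l)"

lemma braid_eq_absorb_full_twist:
  assumes "u \<simeq> full_twist @ v"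
  shows "word_pow full_twist k @ u @ r \<simeq> word_pow full_twist (k + 1) @ v @ r"
proof -
  have "word_pow full_twist k @ u @ r \<simeq> word_pow full_twist k @ (full_twist @ v) @ r"
    using assms by (rule braid_eq_context)
  also have "\<dots> = (word_pow full_twist k @ full_twist) @ v @ r"
    by simp
  also have "\<dots> \<simeq> (full_twist @ word_pow full_twist k) @ v @ r"
    using central_full_twist[unfolded central_def] by (blast intro: braid_eq_append braid_eq.refl)
  also have "\<dots> \<simeq> word_pow full_twist (k + 1) @ v @ r"
    using braid_eq_append[OF word_pow_succ braid_eq.refl] by simp
  finally show ?thesis .
qed

lemma nf_word_cons_syl: "syl_word s @ nf_word N \<simeq> nf_word (cons_syl s N)"
proof -
  obtain k l where N: "N = (k, l)" by (cases N)
  have "syl_word s @ nf_word N \<simeq> word_pow full_twist k @ syl_word s @ concat (map syl_word l)"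
    using braid_eq_append[OF central_word_pow[OF central_full_twist, unfolded central_def, rule_format]
        braid_eq.refl] unfolding N by simp
  also have "\<dots> \<simeq> nf_word (cons_syl s (k, l))"
  proof (cases l)
    case Nil
    then show ?thesis by (cases s) (simp_all add: braid_eq.refl)
  next
    case (Cons s' l')
    let ?p = "word_pow full_twist k" and ?r = "concat (map syl_word l')"
    have AA: "?p @ (syl_word SylA @ syl_word SylA) @ ?r \<simeq> word_pow full_twist (k + 1) @ [] @ ?r"
      by (rule braid_eq_absorb_full_twist) (simp add: full_twist_def braid_eq.refl)
    have BB2: "?p @ (syl_word SylB @ syl_word SylB2) @ ?r \<simeq> word_pow full_twist (k + 1) @ [] @ ?r"
      by (rule braid_eq_absorb_full_twist) (use syl_B_cube in simp)
    have B2B: "?p @ (syl_word SylB2 @ syl_word SylB) @ ?r \<simeq> word_pow full_twist (k + 1) @ [] @ ?r"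
      by (rule braid_eq_absorb_full_twist) (use syl_B_cube in simp)
    have B2B2: "?p @ (syl_word SylB2 @ syl_word SylB2) @ ?r
        \<simeq> word_pow full_twist (k + 1) @ syl_word SylB @ ?r"
      by (rule braid_eq_absorb_full_twist) (rule syl_B2_square)
    show ?thesis
      using AA BB2 B2B B2B2 unfolding Cons
      by (cases s; cases s') (simp_all add: braid_eq.refl)
  qed
  finally show ?thesis unfolding N .
qed

fun letter_syls :: "letter \<Rightarrow> syllable \<times> syllable" where
  "letter_syls (S1, True) = (SylB2, SylA)"
| "letter_syls (S2, True) = (SylA, SylB2)"
| "letter_syls (S1, False) = (SylA, SylB)"
| "letter_syls (S2, False) = (SylB, SylA)"

lemma letter_syls_word:
  assumes "letter_syls x = (s, s')"
  shows "syl_word s @ syl_word s' \<simeq> full_twist @ [x]"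
proof -
  obtain g b where x: "x = (g, b)" by (cases x)
  have "[\<sigma>\<^sub>1, \<sigma>\<^sub>2, \<sigma>\<^sub>1, \<sigma>\<^sub>2] @ [\<sigma>\<^sub>1, \<sigma>\<^sub>2, \<sigma>\<^sub>1] \<simeq> full_twist @ [\<sigma>\<^sub>1]"
    using braid_eq.sym[OF braid_eq_braid_rel[of "[\<sigma>\<^sub>1, \<sigma>\<^sub>2, \<sigma>\<^sub>1]" "[\<sigma>\<^sub>1]"]]
    by (simp add: full_twist_def)
  moreover have "[\<sigma>\<^sub>1, \<sigma>\<^sub>2, \<sigma>\<^sub>1] @ [\<sigma>\<^sub>1, \<sigma>\<^sub>2, \<sigma>\<^sub>1, \<sigma>\<^sub>2] \<simeq> full_twist @ [\<sigma>\<^sub>2]"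
    by (simp add: full_twist_def braid_eq.refl)
  moreover have "[\<sigma>\<^sub>1, \<sigma>\<^sub>2, \<sigma>\<^sub>1] @ [\<sigma>\<^sub>1, \<sigma>\<^sub>2] \<simeq> full_twist @ [inv_letter \<sigma>\<^sub>1]"
    using braid_eq.sym[OF braid_eq_cancel[of "[\<sigma>\<^sub>1, \<sigma>\<^sub>2, \<sigma>\<^sub>1, \<sigma>\<^sub>1, \<sigma>\<^sub>2]" \<sigma>\<^sub>1 "[]"]]
    by (simp add: full_twist_def)
  moreover have "[\<sigma>\<^sub>1, \<sigma>\<^sub>2] @ [\<sigma>\<^sub>1, \<sigma>\<^sub>2, \<sigma>\<^sub>1] \<simeq> full_twist @ [inv_letter \<sigma>\<^sub>2]"
  proof -
    have "full_twist @ [inv_letter \<sigma>\<^sub>2]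
        \<simeq> [\<sigma>\<^sub>1, \<sigma>\<^sub>2, \<sigma>\<^sub>1] @ [\<sigma>\<^sub>2, \<sigma>\<^sub>1, \<sigma>\<^sub>2] @ [inv_letter \<sigma>\<^sub>2]"
      using braid_eq_braid_rel[of "[\<sigma>\<^sub>1, \<sigma>\<^sub>2, \<sigma>\<^sub>1]" "[inv_letter \<sigma>\<^sub>2]"]
      by (simp add: full_twist_def)
    also have "\<dots> \<simeq> [\<sigma>\<^sub>1, \<sigma>\<^sub>2] @ [\<sigma>\<^sub>1, \<sigma>\<^sub>2, \<sigma>\<^sub>1]"
      using braid_eq_cancel[of "[\<sigma>\<^sub>1, \<sigma>\<^sub>2, \<sigma>\<^sub>1, \<sigma>\<^sub>2, \<sigma>\<^sub>1]" \<sigma>\<^sub>2 "[]"] by simp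
    finally show ?thesis by (rule braid_eq.sym)
  qed
  ultimately show ?thesis
    using assms unfolding x by (cases g; cases b) auto
qed

definition cons_letter :: "letter \<Rightarrow> int \<times> syllable list \<Rightarrow> int \<times> syllable list" where
  "cons_letter x N =
     (case letter_syls x of (s, s') \<Rightarrow> cons_syl s (cons_syl s' (fst N - 1, snd N)))"

lemma nf_word_cons_letter: "x # nf_word N \<simeq> nf_word (cons_letter x N)"
proof -
  obtain k l where N: "N = (k, l)" by (cases N)
  obtain s s' where x: "letter_syls x = (s, s')" by (cases "letter_syls x")
  let ?r = "concat (map syl_word l)" and ?ss' = "syl_word s @ syl_word s'"
  have "x # nf_word N = [] @ [x] @ nf_word N"
    by simp
  also have "\<dots> \<simeq> (inv_word full_twist @ full_twist) @ [x] @ nf_word N"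
    using braid_eq_append[OF braid_eq.sym[OF braid_eq_inv_word_left] braid_eq.refl] by simp
  also have "\<dots> = inv_word full_twist @ (full_twist @ [x]) @ nf_word N"
    by simp
  also have "\<dots> \<simeq> inv_word full_twist @ ?ss' @ nf_word N"
    using braid_eq.sym[OF letter_syls_word[OF x]] by (rule braid_eq_context)
  also have "\<dots> \<simeq> ?ss' @ inv_word full_twist @ nf_word N"
  proof -
    have "inv_word full_twist @ ?ss' \<simeq> ?ss' @ inv_word full_twist"
      using central_inv_word[OF central_full_twist] braid_eq.sym unfolding central_def by blast
    from braid_eq_append[OF this braid_eq.refl[of "nf_word N"]] show ?thesis by simp
  qed
  also have "\<dots> = ?ss' @ (inv_word full_twist @ word_pow full_twist k) @ ?r"
    by (simp add: N)
  also have "\<dots> \<simeq> ?ss' @ word_pow full_twist (k - 1) @ ?r"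
    using word_pow_pred by (rule braid_eq_context)
  also have "\<dots> = syl_word s @ (syl_word s' @ nf_word (k - 1, l))"
    by simp
  also have "\<dots> \<simeq> syl_word s @ nf_word (cons_syl s' (k - 1, l))"
    using braid_eq_append[OF braid_eq.refl nf_word_cons_syl] .
  also have "\<dots> \<simeq> nf_word (cons_letter x N)"
    using nf_word_cons_syl by (simp add: cons_letter_def N x)
  finally show ?thesis .
qed

fun normal_form :: "bword \<Rightarrow> int \<times> syllable list" where
  "normal_form [] = (0, [])"
| "normal_form (x # w) = cons_letter x (normal_form w)"

lemma braid_eq_nf_word_normal_form: "w \<simeq> nf_word (normal_form w)"
proof (induction w)
  case Nil
  show ?case by (simp add: braid_eq.refl)
next
  case (Cons x w)
  have "x # w \<simeq> x # nf_word (normal_form w)"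
    using braid_eq_append[OF braid_eq.refl[of "[x]"] Cons.IH] by simp
  also have "\<dots> \<simeq> nf_word (normal_form (x # w))"
    using nf_word_cons_letter by simp
  finally show ?case .
qed

definition alternating :: "syllable list \<Rightarrow> bool" where
  "alternating = successively (\<lambda>r s. (r = SylA) \<noteq> (s = SylA))"

lemma alternating_cons_syl: "alternating (snd N) \<Longrightarrow> alternating (snd (cons_syl s N))"
  unfolding alternating_def
  by (cases "(s, N)" rule: cons_syl.cases) (auto simp: successively_Cons)

lemma alternating_normal_form: "alternating (snd (normal_form w))"
proof (induction w)
  case Nil
  show ?case by (simp add: alternating_def)
next
  case (Cons x w)
  then show ?case
    by (simp add: cons_letter_def alternating_cons_syl split: prod.split)
qed

section \<open>The Burau representation\<close>

lemma mat_mult_left: "mat c ** (A :: 'a::semiring_1^'m^'n) = (\<chi> i j. c * A $ i $ j)"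
proof -
  have "(\<Sum>k\<in>UNIV. (if i = k then c else 0) * A $ k $ j) = c * A $ i $ j" for i j
  proof -
    have "(\<Sum>k\<in>UNIV. (if i = k then c else 0) * A $ k $ j) =
        (\<Sum>k\<in>UNIV. if i = k then c * A $ k $ j else 0)"
      by (rule sum.cong) simp_all
    then show ?thesis by simp
  qed
  then show ?thesis by (simp add: matrix_matrix_mult_def mat_def)
qed

lemma mat_mult_mat: "mat a ** mat b = (mat (a * b) :: 'a::semiring_1^'n^'n)"
  unfolding mat_mult_left by (simp add: mat_def vec_eq_iff)

lemma mat_mult_commute:
  fixes A :: "'a::comm_semiring_1^'n^'n"
  shows "mat c ** A = A ** mat c"
  by (simp add: matrix_matrix_mult_def mat_def vec_eq_iff if_distrib if_distribR mult.commute
      cong: if_cong)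

lemma mat_mult_vector: "mat c *v v = c *s (v :: 'a::semiring_1^'n)"
  unfolding matrix_vector_mult_def mat_def
  by (auto simp: vec_eq_iff if_distrib if_distribR sum.delta'[OF finite] cong: if_cong)

lemma matrix_inv_invertible:
  assumes "invertible A"
  shows "A ** matrix_inv A = mat 1" "matrix_inv A ** A = mat 1"
  using someI_ex[OF assms[unfolded invertible_def]] by (simp_all add: matrix_inv_def)

definition mat2 :: "'a \<Rightarrow> 'a \<Rightarrow> 'a \<Rightarrow> 'a \<Rightarrow> 'a^2^2" where
  "mat2 a b c d = (\<chi> i j. if i = 1 then (if j = 1 then a else b) else (if j = 1 then c else d))"

lemma mat2_nth [simp]:
  "mat2 a b c d $ 1 $ 1 = a" "mat2 a b c d $ 1 $ 2 = b"
  "mat2 a b c d $ 2 $ 1 = c" "mat2 a b c d $ 2 $ 2 = d"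
  by (simp_all add: mat2_def)

lemma mat2_eq_iff: "mat2 a b c d = mat2 a' b' c' d' \<longleftrightarrow> a = a' \<and> b = b' \<and> c = c' \<and> d = d'"
  by (metis mat2_nth)

lemma mat2_mult:
  "mat2 a b c d ** mat2 a' b' c' d' =
     mat2 (a * a' + b * c') (a * b' + b * d') (c * a' + d * c') (c * b' + d * d')"
  by (simp add: matrix_matrix_mult_def vec_eq_iff forall_2 sum_2)

lemma mat_eq_mat2: "mat a = mat2 a 0 0 a"
  by (simp add: mat_def vec_eq_iff forall_2)

lemma mat2_mult_vector:
  "(mat2 a b c d *v v) $ 1 = a * v $ 1 + b * v $ 2"
  "(mat2 a b c d *v v) $ 2 = c * v $ 1 + d * v $ 2"
  by (simp_all add: matrix_vector_mult_def sum_2)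

lemma burau_s1_mat2: "burau_s1 t = mat2 (- t) 1 0 1"
  by (simp add: burau_s1_def mat2_def)

lemma burau_s2_mat2: "burau_s2 t = mat2 1 0 t (- t)"
  by (simp add: burau_s2_def mat2_def)

lemma det_burau_gen: "det (burau_gen t g) = - t"
  by (cases g) (simp_all add: det_2 burau_s1_mat2 burau_s2_mat2)

lemma burau_letter_inverse:
  assumes "t \<noteq> 0"
  shows "burau_letter t x ** burau_letter t (inv_letter x) = mat 1"
proof -
  obtain g b where x: "x = (g, b)" by (cases x)
  have "invertible (burau_gen t g)"
    using assms by (simp add: invertible_det_nz det_burau_gen)
  then show ?thesis
    unfolding x by (cases b) (simp_all add: matrix_inv_invertible)
qed

lemma burau_Nil [simp]: "burau t [] = mat 1"
  by (simp add: burau_def)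

lemma burau_Cons: "burau t (x # w) = burau_letter t x ** burau t w"
  by (simp add: burau_def)

lemma burau_append: "burau t (u @ v) = burau t u ** burau t v"
  by (induction u) (simp_all add: burau_Cons matrix_mul_assoc)

lemma burau_basic_rel:
  assumes "t \<noteq> 0" "basic_rel l r"
  shows "burau t l = burau t r"
  using assms(2)
proof cases
  case (cancel x)
  then show ?thesis
    using burau_letter_inverse[OF assms(1)] by (simp add: burau_Cons)
next
  case braid
  then show ?thesis
    by (simp add: burau_Cons burau_s1_mat2 burau_s2_mat2 mat2_mult algebra_simps)
qed

lemma burau_braid_eq:
  assumes "t \<noteq> 0" "braid_eq w w'"
  shows "burau t w = burau t w'"
  using assms(2) by induction (simp_all add: burau_append burau_basic_rel[OF assms(1)])

section \<open>Ping-pong\<close>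

fun syl_mat :: "'a::semiring_1^'n^'n \<Rightarrow> 'a^'n^'n \<Rightarrow> syllable \<Rightarrow> 'a^'n^'n" where
  "syl_mat A B SylA = A"
| "syl_mat A B SylB = B"
| "syl_mat A B SylB2 = B ** B"

definition syl_prod :: "'a::semiring_1^'n^'n \<Rightarrow> 'a^'n^'n \<Rightarrow> syllable list \<Rightarrow> 'a^'n^'n" where
  "syl_prod A B l = foldr (\<lambda>s M. syl_mat A B s ** M) l (mat 1)"

lemma syl_prod_Nil [simp]: "syl_prod A B [] = mat 1"
  by (simp add: syl_prod_def)

lemma syl_prod_Cons [simp]: "syl_prod A B (s # l) = syl_mat A B s ** syl_prod A B l"
  by (simp add: syl_prod_def)

lemma syl_prod_append: "syl_prod A B (l @ l') = syl_prod A B l ** syl_prod A B l'"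
  by (induction l) (simp_all add: matrix_mul_assoc)

lemma alternating_snoc:
  assumes "alternating (l @ [s])" "l \<noteq> []"
  shows "alternating l" "(last l = SylA) \<noteq> (s = SylA)"
  using assms by (simp_all add: alternating_def successively_append_iff)

locale ping_pong =
  fixes A B :: "'a::field^'n^'n" and \<alpha> \<beta> :: 'a and X Y :: "('a^'n) set"
  assumes A_square: "A ** A = mat \<alpha>"
    and B_cube: "B ** B ** B = mat \<beta>"
    and nonzero: "\<alpha> \<noteq> 0" "\<beta> \<noteq> 0"
    and A_maps: "v \<in> Y \<Longrightarrow> A *v v \<in> X"
    and B_maps: "v \<in> X \<Longrightarrow> B *v v \<in> Y" "v \<in> X \<Longrightarrow> (B ** B) *v v \<in> Y"
    and disjoint: "X \<inter> Y = {}"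
    and X_nonempty: "X \<noteq> {}"
    and zero_notin: "0 \<notin> X" "0 \<notin> Y"
    and scale_closed: "c \<noteq> 0 \<Longrightarrow> v \<in> X \<Longrightarrow> c *s v \<in> X" "c \<noteq> 0 \<Longrightarrow> v \<in> Y \<Longrightarrow> c *s v \<in> Y"
begin

lemma syl_mat_maps:
  "v \<in> (if s = SylA then Y else X) \<Longrightarrow> syl_mat A B s *v v \<in> (if s = SylA then X else Y)"
  by (cases s) (simp_all add: A_maps B_maps)

lemma syl_prod_maps:
  assumes "alternating l" "l \<noteq> []" "v \<in> (if last l = SylA then Y else X)"
  shows "syl_prod A B l *v v \<in> (if hd l = SylA then X else Y)"
  using assms
proof (induction l)
  case Nil
  then show ?case by simp
next
  case (Cons s l)
  show ?case
  proof (cases "l = []")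
    case True
    then show ?thesis using Cons.prems syl_mat_maps by simp
  next
    case False
    have "alternating l" "(s = SylA) \<noteq> (hd l = SylA)"
      using Cons.prems(1) False by (simp_all add: alternating_def successively_Cons)
    moreover have "syl_prod A B l *v v \<in> (if hd l = SylA then X else Y)"
      using Cons.IH Cons.prems False \<open>alternating l\<close> by simp
    ultimately show ?thesis
      using syl_mat_maps[where s = s] by (simp add: matrix_vector_mul_assoc[symmetric] split: if_splits)
  qed
qed

lemma scale_closed_iff:
  assumes "c \<noteq> 0"
  shows "c *s v \<in> X \<longleftrightarrow> v \<in> X" "c *s v \<in> Y \<longleftrightarrow> v \<in> Y"
  using scale_closed[of c v] scale_closed[of "inverse c" "c *s v"] assms
  by (auto simp: vector_smult_assoc)

lemma scalar_mat_not_swap: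
  "v \<in> Y \<Longrightarrow> mat c *v v \<notin> X" "v \<in> X \<Longrightarrow> mat c *v v \<notin> Y"
  using zero_notin disjoint scale_closed_iff[of c v]
  by (cases "c = 0"; force simp: mat_mult_vector)+

lemma syl_mat_B_twice_maps:
  assumes "s \<noteq> SylA" "v \<in> X"
  shows "syl_mat A B s *v (syl_mat A B s *v v) \<in> Y"
proof (cases s)
  case SylB
  then show ?thesis using B_maps(2)[OF assms(2)] by (simp add: matrix_vector_mul_assoc)
next
  case SylB2
  have "(B ** B) ** (B ** B) = mat \<beta> ** B"
    using B_cube by (simp add: matrix_mul_assoc mat_mult_commute)
  then have "syl_mat A B s *v (syl_mat A B s *v v) = \<beta> *s (B *v v)"
    by (simp add: SylB2 matrix_vector_mul_assoc mat_mult_vector[symmetric])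
  then show ?thesis using scale_closed(2)[OF nonzero(2) B_maps(1)[OF assms(2)]] by simp
qed (use assms in simp)

lemma syl_prod_not_scalar_ends_equal:
  assumes "alternating l" "l \<noteq> []" "(hd l = SylA) = (last l = SylA)"
  shows "syl_prod A B l \<noteq> mat c"
proof
  assume scalar: "syl_prod A B l = mat c"
  obtain x where x: "x \<in> X" using X_nonempty by blast
  show False
  proof (cases "hd l = SylA")
    case True
    have "B *v x \<in> Y" using B_maps(1)[OF x] .
    then show False
      using syl_prod_maps[OF assms(1,2)] scalar_mat_not_swap(1) assms(3) True scalar by force
  next
    case False
    then show False
      using syl_prod_maps[OF assms(1,2) ] scalar_mat_not_swap(2) assms(3) x scalar by force
  qed
qed

lemma syl_prod_not_scalar_ends_A_B:
  assumes "alternating l" "l \<noteq> []" "hd l = SylA" "last l \<noteq> SylA"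
  shows "syl_prod A B l \<noteq> mat c"
proof
  assume scalar: "syl_prod A B l = mat c"
  obtain x where x: "x \<in> X" using X_nonempty by blast
  define m s where "m = butlast l" and "s = last l"
  have l: "l = m @ [s]" using assms(2) by (simp add: m_def s_def)
  have "m \<noteq> []" using assms(3,4) l by auto
  have s: "s \<noteq> SylA" using assms(4) by (simp add: s_def)
  have m: "alternating m" "last m = SylA" "hd m = SylA"
    using alternating_snoc[of m s] assms(1,3) \<open>m \<noteq> []\<close> l s by auto
  define v where "v = syl_mat A B s *v x"
  have "v \<in> Y" using syl_mat_maps[where s = s and v = x] x s by (simp add: v_def)
  moreover have "syl_mat A B s *v v \<in> Y"
    using syl_mat_B_twice_maps s x by (simp add: v_def)
  then have "syl_prod A B l *v v \<in> X"
    using syl_prod_maps[OF m(1) \<open>m \<noteq> []\<close>] m l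
    by (simp add: syl_prod_append matrix_vector_mul_assoc[symmetric])
  ultimately show False using scalar_mat_not_swap(1) scalar by simp
qed

lemma syl_prod_not_scalar:
  assumes "alternating l" "l \<noteq> []"
  shows "syl_prod A B l \<noteq> mat c"
proof (cases "(hd l = SylA) = (last l = SylA)")
  case True
  then show ?thesis using syl_prod_not_scalar_ends_equal assms by blast
next
  case False
  show ?thesis
  proof (cases "hd l = SylA")
    case True
    then show ?thesis using False syl_prod_not_scalar_ends_A_B assms by simp
  next
    case hd_B: False
    \<comment> \<open>conjugating by A moves the final A to the front\<close>
    define m where "m = butlast l"
    have "last l = SylA" using False hd_B by simp
    then have l: "l = m @ [SylA]" using append_butlast_last_id[OF assms(2)] by (simp add: m_def)
    have "m \<noteq> []" using hd_B l by auto
    have alt: "alternating (SylA # m)" and last: "last (SylA # m) \<noteq> SylA"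
      using alternating_snoc[of m SylA] assms(1) l \<open>m \<noteq> []\<close> hd_B
      by (auto simp: alternating_def successively_Cons hd_append)
    have not_scalar: "syl_prod A B (SylA # m) \<noteq> mat c"
      using syl_prod_not_scalar_ends_A_B[OF alt _ _ last] by simp
    show ?thesis
    proof
      assume scalar: "syl_prod A B l = mat c"
      have "syl_prod A B (SylA # m) ** mat \<alpha> = A ** (syl_prod A B m ** A) ** A"
        using A_square by (simp add: matrix_mul_assoc[symmetric])
      also have "\<dots> = A ** (A ** mat c)"
        using scalar l by (simp add: syl_prod_append mat_mult_commute matrix_mul_assoc[symmetric])
      also have "\<dots> = mat (c * \<alpha>)"
        using A_square by (simp add: matrix_mul_assoc mat_mult_mat mult.commute)
      finally have "syl_prod A B (SylA # m) ** mat \<alpha> ** mat (inverse \<alpha>) = mat (c * \<alpha>) ** mat (inverse \<alpha>)"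
        by simp
      then have "syl_prod A B (SylA # m) = mat c"
        using nonzero(1) by (simp add: matrix_mul_assoc[symmetric] mat_mult_mat mult.assoc)
      then show False using not_scalar by simp
    qed
  qed
qed

end

lemma burau_syl_A: "burau t (syl_word SylA) = mat2 0 (- t) (- (t\<^sup>2)) 0"
  by (simp add: burau_Cons burau_s1_mat2 burau_s2_mat2 mat_eq_mat2 mat2_mult power2_eq_square)

lemma burau_syl_B: "burau t (syl_word SylB) = mat2 0 (- t) t (- t)"
  by (simp add: burau_Cons burau_s1_mat2 burau_s2_mat2 mat_eq_mat2 mat2_mult)

lemma burau_concat_syl_word:
  "burau t (concat (map syl_word l)) = syl_prod (burau t (syl_word SylA)) (burau t (syl_word SylB)) l"
proof -
  have "burau t (syl_word s) = syl_mat (burau t (syl_word SylA)) (burau t (syl_word SylB)) s" for s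
    by (cases s) (simp_all add: burau_append[symmetric])
  then show ?thesis
    by (induction l) (simp_all add: burau_append)
qed

lemma burau_syl_A_square: "burau t (syl_word SylA) ** burau t (syl_word SylA) = mat (t ^ 3)"
  unfolding burau_syl_A by (simp add: mat2_mult mat_eq_mat2 power2_eq_square power3_eq_cube mult.assoc)

lemma burau_syl_B_cube:
  "burau t (syl_word SylB) ** burau t (syl_word SylB) ** burau t (syl_word SylB) = mat (t ^ 3)"
  unfolding burau_syl_B by (simp add: mat2_mult mat_eq_mat2 power3_eq_cube mult.assoc)

lemma burau_full_twist: "burau t full_twist = mat (t ^ 3)"
  unfolding full_twist_def burau_append by (rule burau_syl_A_square)

lemma burau_inv_word:
  assumes "t \<noteq> 0"
  shows "burau t (inv_word w) ** burau t w = mat 1"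
  using burau_braid_eq[OF assms braid_eq_inv_word_left[of w]] by (simp add: burau_append)

lemma burau_word_pow:
  assumes "t \<noteq> 0" "burau t z = mat d" "d \<noteq> 0"
  shows "burau t (word_pow z k) = mat (d powi k)"
proof -
  have replicate: "burau t (concat (replicate n u)) = mat (c ^ n)" if "burau t u = mat c" for u c n
    using that by (induction n) (simp_all add: burau_append mat_mult_mat)
  have "burau t (inv_word z) = burau t (inv_word z) ** (mat d ** mat (inverse d))"
    using assms(3) by (simp add: mat_mult_mat)
  also have "\<dots> = mat (inverse d)"
    using burau_inv_word[OF assms(1), of z] assms(2) by (simp add: matrix_mul_assoc)
  finally have "burau t (inv_word z) = mat (inverse d)" .
  then show ?thesis
    using assms(2) by (simp add: word_pow_def power_int_def replicate)
qed

lemma burau_nf_word: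
  assumes "t \<noteq> 0"
  shows "burau t (nf_word (k, l)) =
    mat ((t ^ 3) powi k) ** syl_prod (burau t (syl_word SylA)) (burau t (syl_word SylB)) l"
  using assms by (simp add: burau_append burau_word_pow burau_full_twist burau_concat_syl_word)

lemma power_int_eq_1_imp_zero:
  fixes x :: "'a::real_normed_field"
  assumes "x powi k = 1" "norm x \<noteq> 1"
  shows "k = 0"
proof (cases "0 \<le> k")
  case True
  then have "x ^ nat k = 1" using assms(1) by (simp add: power_int_def)
  then show ?thesis using power_eq_1_iff assms(2) True by fastforce
next
  case False
  then have "inverse x ^ nat (- k) = 1" using assms(1) by (simp add: power_int_def)
  then have "norm (inverse x) = 1 \<or> nat (- k) = 0" by (rule power_eq_1_iff)
  then show ?thesis using assms(2) False by (auto simp: norm_inverse)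
qed

lemma burau_trivial_kernel:
  assumes "t \<noteq> 0" "cmod t \<noteq> 1"
    and "ping_pong (burau t (syl_word SylA)) (burau t (syl_word SylB)) \<alpha> \<beta> X Y"
    and "burau t w = mat 1"
  shows "w \<simeq> []"
proof -
  let ?P = "syl_prod (burau t (syl_word SylA)) (burau t (syl_word SylB))"
  obtain k l where nf: "normal_form w = (k, l)" by (cases "normal_form w")
  define d where "d = (t ^ 3) powi k"
  have "d \<noteq> 0" using assms(1) by (simp add: d_def power_int_not_zero)
  have w: "w \<simeq> nf_word (k, l)"
    using braid_eq_nf_word_normal_form[of w] nf by simp
  then have "mat d ** ?P l = mat 1"
    using burau_braid_eq[OF assms(1) w] assms(4) burau_nf_word[OF assms(1)] by (simp add: d_def)
  then have "mat (inverse d) ** mat d ** ?P l = mat (inverse d)"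
    by (simp add: matrix_mul_assoc[symmetric])
  then have P: "?P l = mat (inverse d)"
    using \<open>d \<noteq> 0\<close> by (simp add: mat_mult_mat)
  have "l = []"
    using ping_pong.syl_prod_not_scalar[OF assms(3)] alternating_normal_form[of w] nf P by fastforce
  then have "d = 1"
    using P by (simp add: mat_eq_mat2 mat2_eq_iff)
  moreover have "cmod t ^ 3 \<noteq> 1"
    using power_eq_1_iff[of "cmod t" 3] assms(2) by auto
  ultimately have "k = 0"
    using power_int_eq_1_imp_zero[of "t ^ 3" k] by (simp add: d_def norm_power)
  show ?thesis using w \<open>k = 0\<close> \<open>l = []\<close> by simp
qed

lemma burau_eq_imp_braid_eq:
  assumes "t \<noteq> 0" "cmod t \<noteq> 1"
    and "ping_pong (burau t (syl_word SylA)) (burau t (syl_word SylB)) \<alpha> \<beta> X Y"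
    and "burau t w1 = burau t w2"
  shows "w1 \<simeq> w2"
proof -
  have "burau t (w1 @ inv_word w2) = burau t (w2 @ inv_word w2)"
    using assms(4) by (simp add: burau_append)
  also have "\<dots> = mat 1"
    using burau_braid_eq[OF assms(1) braid_eq_inv_word_right] by simp
  finally have "w1 @ inv_word w2 \<simeq> []"
    by (rule burau_trivial_kernel[OF assms(1-3)])
  then show ?thesis
    by (rule braid_eq_if_append_inv_word)
qed

definition cone_lt :: "real \<Rightarrow> 2 \<Rightarrow> real \<Rightarrow> 2 \<Rightarrow> (complex^2) set" where
  "cone_lt p i q j = {v. p * cmod (v $ i) < q * cmod (v $ j)}"

lemma zero_notin_cone_lt: "0 \<notin> cone_lt p i q j"
  by (simp add: cone_lt_def)

lemma cmod_mult_less_iff: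
  "c \<noteq> 0 \<Longrightarrow> p * cmod (c * a) < q * cmod (c * b) \<longleftrightarrow> p * cmod a < q * cmod b"
  by (simp add: norm_mult mult.left_commute[of p] mult.left_commute[of q])

lemma cone_lt_scale: "c \<noteq> 0 \<Longrightarrow> v \<in> cone_lt p i q j \<Longrightarrow> c *s v \<in> cone_lt p i q j"
  by (simp add: cone_lt_def cmod_mult_less_iff)

lemma ping_pong_cone_lt:
  fixes A B :: "complex^2^2"
  assumes "i \<noteq> j"
    and "A ** A = mat \<alpha>" "B ** B ** B = mat \<beta>" "\<alpha> \<noteq> 0" "\<beta> \<noteq> 0"
    and "\<And>v. v \<in> cone_lt 2 j 3 i \<Longrightarrow> A *v v \<in> cone_lt 2 i 1 j"
    and "\<And>v. v \<in> cone_lt 2 i 1 j \<Longrightarrow> B *v v \<in> cone_lt 2 j 3 i"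
    and "\<And>v. v \<in> cone_lt 2 i 1 j \<Longrightarrow> (B ** B) *v v \<in> cone_lt 2 j 3 i"
  shows "ping_pong A B \<alpha> \<beta> (cone_lt 2 i 1 j) (cone_lt 2 j 3 i)"
proof
  show "cone_lt 2 i 1 j \<inter> cone_lt 2 j 3 i = {}"
  proof -
    have False if "2 * cmod (v $ i) < cmod (v $ j)" "2 * cmod (v $ j) < 3 * cmod (v $ i)" for v
      using that norm_ge_zero[of "v $ i"] by linarith
    then show ?thesis by (auto simp: cone_lt_def)
  qed
  show "cone_lt 2 i 1 j \<noteq> {}"
    using assms(1) by (auto simp: cone_lt_def axis_def intro!: exI[of _ "axis j 1"])
qed (use assms zero_notin_cone_lt cone_lt_scale in auto)


lemma burau_syl_A_apply:
  "(burau t (syl_word SylA) *v v) $ 1 = t * (- v $ 2)"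
  "(burau t (syl_word SylA) *v v) $ 2 = t\<^sup>2 * (- v $ 1)"
  unfolding burau_syl_A by (simp_all add: mat2_mult_vector)

lemma burau_syl_B_apply:
  "(burau t (syl_word SylB) *v v) $ 1 = t * (- v $ 2)"
  "(burau t (syl_word SylB) *v v) $ 2 = t * (v $ 1 - v $ 2)"
  unfolding burau_syl_B by (simp_all add: mat2_mult_vector algebra_simps)

lemma burau_syl_B_square_apply:
  "(burau t (syl_word SylB) ** burau t (syl_word SylB) *v v) $ 1 = t\<^sup>2 * (v $ 2 - v $ 1)"
  "(burau t (syl_word SylB) ** burau t (syl_word SylB) *v v) $ 2 = t\<^sup>2 * (- v $ 1)"
  unfolding burau_syl_B mat2_mult by (simp_all add: mat2_mult_vector algebra_simps power2_eq_square)

lemma burau_ping_pong_large: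
  assumes "3 \<le> cmod t"
  shows "ping_pong (burau t (syl_word SylA)) (burau t (syl_word SylB)) (t ^ 3) (t ^ 3)
    (cone_lt 2 1 1 2) (cone_lt 2 2 3 1)"
proof (rule ping_pong_cone_lt)
  have "t \<noteq> 0" using assms by auto
  then show "t ^ 3 \<noteq> 0" "t ^ 3 \<noteq> 0" by simp_all
  fix v :: "complex^2"
  show "burau t (syl_word SylA) *v v \<in> cone_lt 2 1 1 2" if "v \<in> cone_lt 2 2 3 1"
  proof -
    have "2 * cmod (v $ 2) < 3 * cmod (v $ 1)" using that by (simp add: cone_lt_def)
    also have "\<dots> \<le> cmod t * cmod (v $ 1)" using assms by (simp add: mult_right_mono)
    finally have "cmod t * (2 * cmod (v $ 2)) < cmod t * (cmod t * cmod (v $ 1))"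
      using \<open>t \<noteq> 0\<close> by simp
    then show ?thesis
      unfolding cone_lt_def mem_Collect_eq burau_syl_A_apply
      by (simp add: norm_mult norm_power power2_eq_square mult_ac)
  qed
  show "burau t (syl_word SylB) *v v \<in> cone_lt 2 2 3 1" if "v \<in> cone_lt 2 1 1 2"
  proof -
    have "2 * cmod (v $ 1) < cmod (v $ 2)" using that by (simp add: cone_lt_def)
    then have "2 * cmod (v $ 1 - v $ 2) < 3 * cmod (v $ 2)"
      using norm_triangle_ineq4[of "v $ 1" "v $ 2"] by linarith
    then show ?thesis
      using \<open>t \<noteq> 0\<close> unfolding cone_lt_def mem_Collect_eq burau_syl_B_apply by (simp add: cmod_mult_less_iff)
  qed
  show "burau t (syl_word SylB) ** burau t (syl_word SylB) *v v \<in> cone_lt 2 2 3 1"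
    if "v \<in> cone_lt 2 1 1 2"
  proof -
    have "2 * cmod (v $ 1) < cmod (v $ 2)" using that by (simp add: cone_lt_def)
    then have "2 * cmod (v $ 1) < 3 * cmod (v $ 2 - v $ 1)"
      using norm_triangle_ineq2[of "v $ 2" "v $ 1"] norm_ge_zero[of "v $ 1"] by linarith
    then show ?thesis
      using \<open>t \<noteq> 0\<close> unfolding cone_lt_def mem_Collect_eq burau_syl_B_square_apply by (simp add: cmod_mult_less_iff)
  qed
qed (simp_all only: burau_syl_A_square burau_syl_B_cube, simp)

lemma burau_ping_pong_small:
  assumes "t \<noteq> 0" "cmod t \<le> 1 / 3"
  shows "ping_pong (burau t (syl_word SylA)) (burau t (syl_word SylB)) (t ^ 3) (t ^ 3)
    (cone_lt 2 2 1 1) (cone_lt 2 1 3 2)"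
proof (rule ping_pong_cone_lt)
  show "t ^ 3 \<noteq> 0" "t ^ 3 \<noteq> 0" using assms(1) by simp_all
  fix v :: "complex^2"
  show "burau t (syl_word SylA) *v v \<in> cone_lt 2 2 1 1" if "v \<in> cone_lt 2 1 3 2"
  proof -
    have "cmod t * (2 * cmod (v $ 1)) \<le> 1 / 3 * (2 * cmod (v $ 1))"
      by (rule mult_right_mono) (use assms(2) in simp_all)
    also have "\<dots> < cmod (v $ 2)" using that by (simp add: cone_lt_def)
    finally have "cmod t * (cmod t * (2 * cmod (v $ 1))) < cmod t * cmod (v $ 2)"
      using assms(1) by simp
    then show ?thesis
      unfolding cone_lt_def mem_Collect_eq burau_syl_A_apply
      by (simp add: norm_mult norm_power power2_eq_square mult_ac)
  qed
  show "burau t (syl_word SylB) *v v \<in> cone_lt 2 1 3 2" if "v \<in> cone_lt 2 2 1 1"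
  proof -
    have "2 * cmod (v $ 2) < cmod (v $ 1)" using that by (simp add: cone_lt_def)
    then have "2 * cmod (v $ 2) < 3 * cmod (v $ 1 - v $ 2)"
      using norm_triangle_ineq2[of "v $ 1" "v $ 2"] norm_ge_zero[of "v $ 2"] by linarith
    then show ?thesis
      using assms(1) unfolding cone_lt_def mem_Collect_eq burau_syl_B_apply by (simp add: cmod_mult_less_iff)
  qed
  show "burau t (syl_word SylB) ** burau t (syl_word SylB) *v v \<in> cone_lt 2 1 3 2"
    if "v \<in> cone_lt 2 2 1 1"
  proof -
    have "2 * cmod (v $ 2) < cmod (v $ 1)" using that by (simp add: cone_lt_def)
    then have "2 * cmod (v $ 2 - v $ 1) < 3 * cmod (v $ 1)"
      using norm_triangle_ineq4[of "v $ 2" "v $ 1"] by linarith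
    then show ?thesis
      using assms(1) unfolding cone_lt_def mem_Collect_eq burau_syl_B_square_apply by (simp add: cmod_mult_less_iff)
  qed
qed (simp_all only: burau_syl_A_square burau_syl_B_cube, simp)

theorem theorem2:
  fixes t :: complex
  assumes "t \<noteq> 0"
    and "cmod t < 3 - 2 * sqrt 2 \<or> cmod t > 3 + 2 * sqrt 2"
  shows "\<forall>w1 w2. burau t w1 = burau t w2 \<longrightarrow> braid_eq w1 w2"
proof (intro allI impI)
  fix w1 w2
  assume "burau t w1 = burau t w2"
  have "4 / 3 \<le> sqrt 2"
    by (rule real_le_rsqrt) (simp add: power2_eq_square)
  then have small_or_large: "cmod t \<le> 1 / 3 \<or> 3 \<le> cmod t" and "cmod t \<noteq> 1"
    using assms(2) by auto
  obtain X Y where "ping_pong (burau t (syl_word SylA)) (burau t (syl_word SylB)) (t ^ 3) (t ^ 3) X Y"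
    using small_or_large burau_ping_pong_small[OF assms(1)] burau_ping_pong_large by blast
  then show "w1 \<simeq> w2"
    using burau_eq_imp_braid_eq assms(1) \<open>cmod t \<noteq> 1\<close> \<open>burau t w1 = burau t w2\<close> by blast
qed

end
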